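(* ${\bf KT^\boxdot}$ is sound and strongly complete with respect to the class of reflexive bimodal frames (both $R_1$ and $R_2$ reflexive), and also with respect to the class of bimodal frames $\langle S,R_1,R_2\rangle$ in which at least one of $R_1,R_2$ is reflexive.
   Context: Fix a nonempty set $\mathbf{P}$ of propositional variables. A bimodal model is $\langle S,R_1,R_2,V\rangle$ with $S$ nonempty, $R_1,R_2\subseteq S\times S$, $V:\mathbf{P}\to\mathcal{P}(S)$. $\mathcal{L}(\boxdot):\ \phi::=p\mid\neg\phi\mid(\phi\wedge\phi)\mid\boxdot\phi$. Truth: $\mathcal{M},s\vDash\boxdot\phi$ iff for all $t,u$ with $sR_1t$ and $sR_2u$, ($\mathcal{M},t\vDash\phi\iff\mathcal{M},u\vDash\phi$); atoms and Booleans as usual. ${\bf K^\boxdot}$ has axioms: all instances of propositional tautologies; $\boxdot\top$; $\boxdot\phi\leftrightarrow\boxdot\neg\phi$; $\boxdot\phi\wedge\boxdot\psi\to\boxdot(\phi\wedge\psi)$; $\boxdot\phi\to\boxdot(\phi\vee\psi)\vee\boxdot(\neg\phi\vee\chi)$; and rules: modus ponens and RE: from $\phi\leftrightarrow\psi$ infer $\boxdot\phi\leftrightarrow\boxdot\psi$. ${\bf KT^\boxdot}$ is ${\bf K^\boxdot}$ plus the axiom schema $\phi\to[\boxdot\phi\to(\boxdot(\phi\to\psi)\to\boxdot\psi)]$. Sound and strongly complete w.r.t. a class $\mathbb{C}$ of frames means: $\Gamma\vdash\phi$ iff $\phi$ is true at every state of every model based on a frame in $\mathbb{C}$ at which all of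 $\Gamma$ is true. *)

theory Defs
  imports Main
begin

datatype 'p fm = Atom 'p | Neg "'p fm" | Conj "'p fm" "'p fm" | Dot "'p fm"

definition Disj :: "'p fm \<Rightarrow> 'p fm \<Rightarrow> 'p fm" where
  "Disj a b = Neg (Conj (Neg a) (Neg b))"
definition Imp :: "'p fm \<Rightarrow> 'p fm \<Rightarrow> 'p fm" where
  "Imp a b = Neg (Conj a (Neg b))"
definition Iff :: "'p fm \<Rightarrow> 'p fm \<Rightarrow> 'p fm" where
  "Iff a b = Conj (Imp a b) (Imp b a)"
text \<open>Top as p or not p for a fixed atom (the set of atoms, a type, is nonempty).\<close>
definition Top :: "'p fm" where
  "Top = Neg (Conj (Atom undefined) (Neg (Atom undefined)))"

text \<open>Propositional evaluation: atoms and Dot-formulas are treated as propositional letters.\<close>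
fun peval :: "('p fm \<Rightarrow> bool) \<Rightarrow> 'p fm \<Rightarrow> bool" where
  "peval f (Atom p) = f (Atom p)"
| "peval f (Neg a) = (\<not> peval f a)"
| "peval f (Conj a b) = (peval f a \<and> peval f b)"
| "peval f (Dot a) = f (Dot a)"

definition tautology :: "'p fm \<Rightarrow> bool" where
  "tautology \<phi> = (\<forall>f. peval f \<phi>)"

inductive KTdot :: "'p fm \<Rightarrow> bool" where
  taut: "tautology \<phi> \<Longrightarrow> KTdot \<phi>"
| dot_top: "KTdot (Dot Top)"
| dot_neg: "KTdot (Iff (Dot \<phi>) (Dot (Neg \<phi>)))"
| dot_conj: "KTdot (Imp (Conj (Dot \<phi>) (Dot \<psi>)) (Dot (Conj \<phi> \<psi>)))"
| dot_split: "KTdot (Imp (Dot \<phi>) (Disj (Dot (Disj \<phi> \<psi>)) (Dot (Disj (Neg \<phi>) \<chi>))))"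
| axT: "KTdot (Imp \<phi> (Imp (Dot \<phi>) (Imp (Dot (Imp \<phi> \<psi>)) (Dot \<psi>))))"
| mp: "KTdot (Imp \<phi> \<psi>) \<Longrightarrow> KTdot \<phi> \<Longrightarrow> KTdot \<psi>"
| re: "KTdot (Iff \<phi> \<psi>) \<Longrightarrow> KTdot (Iff (Dot \<phi>) (Dot \<psi>))"

fun conjs :: "'p fm list \<Rightarrow> 'p fm" where
  "conjs [] = Top"
| "conjs (x # xs) = Conj x (conjs xs)"

definition derives :: "'p fm set \<Rightarrow> 'p fm \<Rightarrow> bool" where
  "derives \<Gamma> \<phi> = (\<exists>L. set L \<subseteq> \<Gamma> \<and> KTdot (Imp (conjs L) \<phi>))"

definition is_model :: "'s set \<Rightarrow> ('s \<Rightarrow> 's \<Rightarrow> bool) \<Rightarrow> ('s \<Rightarrow> 's \<Rightarrow> bool) \<Rightarrow> ('p \<Rightarrow> 's set) \<Rightarrow> bool" where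
  "is_model S R1 R2 V = (S \<noteq> {} \<and> (\<forall>s t. R1 s t \<longrightarrow> s \<in> S \<and> t \<in> S)
      \<and> (\<forall>s t. R2 s t \<longrightarrow> s \<in> S \<and> t \<in> S) \<and> (\<forall>p. V p \<subseteq> S))"

fun sat :: "('s \<Rightarrow> 's \<Rightarrow> bool) \<Rightarrow> ('s \<Rightarrow> 's \<Rightarrow> bool) \<Rightarrow> ('p \<Rightarrow> 's set) \<Rightarrow> 's \<Rightarrow> 'p fm \<Rightarrow> bool" where
  "sat R1 R2 V s (Atom p) = (s \<in> V p)"
| "sat R1 R2 V s (Neg a) = (\<not> sat R1 R2 V s a)"
| "sat R1 R2 V s (Conj a b) = (sat R1 R2 V s a \<and> sat R1 R2 V s b)"
| "sat R1 R2 V s (Dot a) = (\<forall>t u. R1 s t \<longrightarrow> R2 s u \<longrightarrow> (sat R1 R2 V t a \<longleftrightarrow> sat R1 R2 V u a))"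

definition refl_on_S :: "'s set \<Rightarrow> ('s \<Rightarrow> 's \<Rightarrow> bool) \<Rightarrow> bool" where
  "refl_on_S S R = (\<forall>s\<in>S. R s s)"

definition both_refl :: "'s set \<Rightarrow> ('s \<Rightarrow> 's \<Rightarrow> bool) \<Rightarrow> ('s \<Rightarrow> 's \<Rightarrow> bool) \<Rightarrow> bool" where
  "both_refl S R1 R2 = (refl_on_S S R1 \<and> refl_on_S S R2)"

definition one_refl :: "'s set \<Rightarrow> ('s \<Rightarrow> 's \<Rightarrow> bool) \<Rightarrow> ('s \<Rightarrow> 's \<Rightarrow> bool) \<Rightarrow> bool" where
  "one_refl S R1 R2 = (refl_on_S S R1 \<or> refl_on_S S R2)"

definition conseq :: "('s set \<Rightarrow> ('s \<Rightarrow> 's \<Rightarrow> bool) \<Rightarrow> ('s \<Rightarrow> 's \<Rightarrow> bool) \<Rightarrow> bool) \<Rightarrow> 'p fm set \<Rightarrow> 'p fm \<Rightarrow> bool" where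
  "conseq C \<Gamma> \<phi> = (\<forall>S R1 R2 V. is_model S R1 R2 V \<and> C S R1 R2 \<longrightarrow>
      (\<forall>s\<in>S. (\<forall>\<gamma>\<in>\<Gamma>. sat R1 R2 V s \<gamma>) \<longrightarrow> sat R1 R2 V s \<phi>))"

end

theory Submission
  imports Defs
begin

text \<open>
  Soundness: in any model, \<open>\<boxdot>a\<close> holds at a state with both an \<open>R\<^sub>1\<close>- and an \<open>R\<^sub>2\<close>-successor
  iff \<open>a\<close> is constant on all its successors, and holds vacuously otherwise; this validates the
  axioms of \<open>K\<^sup>\<boxdot>\<close>. Axiom T holds wherever the state is its own \<open>R\<^sub>1\<close>- or \<open>R\<^sub>2\<close>-successor: then
  \<open>\<phi>\<close> and \<open>\<boxdot>\<phi>\<close> force \<open>\<phi>\<close> to be true on all successors, where \<open>\<phi> \<rightarrow> \<psi>\<close> and \<open>\<psi>\<close> coincide.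

  Completeness: in the canonical model both relations are the same relation, under which \<open>t\<close> is
  accessible from \<open>s\<close> iff \<open>t\<close> contains every \<open>\<psi>\<close> such that both \<open>\<psi>\<close> and \<open>\<boxdot>\<psi>\<close> lie in \<open>s\<close>. It is
  reflexive, so the canonical frame lies in both frame classes, and the truth lemma reduces to:
  \<open>\<boxdot>a \<in> s\<close> iff every successor of \<open>s\<close> agrees with \<open>s\<close> on \<open>a\<close>. Axiom T together with the
  necessitation rule derived from RE and \<open>\<boxdot>\<top>\<close> provides the witnesses for the hard direction.
\<close>

lemma sat_peval: "sat R1 R2 V s \<phi> = peval (sat R1 R2 V s) \<phi>"
  by (induction \<phi>) auto

lemma sat_Top [simp]: "sat R1 R2 V s Top"
  by (simp add: Top_def)

lemma sat_Imp [simp]: "sat R1 R2 V s (Imp a b) = (sat R1 R2 V s a \<longrightarrow> sat R1 R2 V s b)"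
  by (simp add: Imp_def)

lemma sat_Disj [simp]: "sat R1 R2 V s (Disj a b) = (sat R1 R2 V s a \<or> sat R1 R2 V s b)"
  by (simp add: Disj_def)

lemma sat_Iff [simp]: "sat R1 R2 V s (Iff a b) = (sat R1 R2 V s a \<longleftrightarrow> sat R1 R2 V s b)"
  by (auto simp: Iff_def)

lemma sat_conjs: "sat R1 R2 V s (conjs L) = (\<forall>x\<in>set L. sat R1 R2 V s x)"
  by (induction L) auto

lemma sat_Dot_vacuous:
  "\<not> ((\<exists>t. R1 s t) \<and> (\<exists>u. R2 s u)) \<Longrightarrow> sat R1 R2 V s (Dot a)"
  by auto

lemma sat_Dot_iff_constant:
  assumes succ: "R1 s t\<^sub>0" "R2 s u\<^sub>0"
  shows "sat R1 R2 V s (Dot a) \<longleftrightarrow>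
    (\<forall>v. R1 s v \<or> R2 s v \<longrightarrow> sat R1 R2 V v a = sat R1 R2 V t\<^sub>0 a)"
proof
  assume "sat R1 R2 V s (Dot a)"
  then have agree: "R1 s t \<Longrightarrow> R2 s u \<Longrightarrow> sat R1 R2 V t a = sat R1 R2 V u a" for t u
    by simp
  show "\<forall>v. R1 s v \<or> R2 s v \<longrightarrow> sat R1 R2 V v a = sat R1 R2 V t\<^sub>0 a"
    using agree[OF _ succ(2)] agree[OF succ(1)] agree[OF succ] by metis
qed simp

lemma sat_Dot_cong:
  assumes "\<And>v. R1 s v \<or> R2 s v \<Longrightarrow> sat R1 R2 V v a = sat R1 R2 V v b"
  shows "sat R1 R2 V s (Dot a) = sat R1 R2 V s (Dot b)"
  using assms by simp

lemma sat_dot_split: "sat R1 R2 V s (Imp (Dot \<phi>) (Disj (Dot (Disj \<phi> \<psi>)) (Dot (Disj (Neg \<phi>) \<chi>))))"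
proof (cases "(\<exists>t. R1 s t) \<and> (\<exists>u. R2 s u)")
  case True
  then obtain t\<^sub>0 u\<^sub>0 where succ: "R1 s t\<^sub>0" "R2 s u\<^sub>0" by blast
  show ?thesis
    unfolding sat_Imp sat_Disj sat_Dot_iff_constant[of R1 s t\<^sub>0 R2 u\<^sub>0, OF succ]
    by (cases "sat R1 R2 V t\<^sub>0 \<phi>") auto
qed (simp add: sat_Dot_vacuous del: sat.simps(4))

lemma sat_axT:
  assumes "R1 s s \<or> R2 s s"
  shows "sat R1 R2 V s (Imp \<phi> (Imp (Dot \<phi>) (Imp (Dot (Imp \<phi> \<psi>)) (Dot \<psi>))))"
proof (cases "(\<exists>t. R1 s t) \<and> (\<exists>u. R2 s u)")
  case True
  then obtain t\<^sub>0 u\<^sub>0 where succ: "R1 s t\<^sub>0" "R2 s u\<^sub>0" by blast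
  have "sat R1 R2 V s (Dot \<psi>)"
    if "sat R1 R2 V s \<phi>" "sat R1 R2 V s (Dot \<phi>)" "sat R1 R2 V s (Dot (Imp \<phi> \<psi>))"
  proof -
    have const: "\<forall>v. R1 s v \<or> R2 s v \<longrightarrow> sat R1 R2 V v \<phi> = sat R1 R2 V t\<^sub>0 \<phi>"
      using that(2) sat_Dot_iff_constant[of R1 s t\<^sub>0 R2 u\<^sub>0, OF succ] by blast
    then have "sat R1 R2 V t\<^sub>0 \<phi>"
      using assms that(1) by blast
    then have "\<And>v. R1 s v \<or> R2 s v \<Longrightarrow> sat R1 R2 V v \<phi>"
      using const by blast
    then have "sat R1 R2 V s (Dot (Imp \<phi> \<psi>)) = sat R1 R2 V s (Dot \<psi>)"
      by (intro sat_Dot_cong) simp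
    then show ?thesis using that(3) by blast
  qed
  then show ?thesis by (simp only: sat_Imp) blast
qed (simp add: sat_Dot_vacuous del: sat.simps(4))

section \<open>Soundness\<close>

definition valid_in :: "'s set \<Rightarrow> ('s \<Rightarrow> 's \<Rightarrow> bool) \<Rightarrow> ('s \<Rightarrow> 's \<Rightarrow> bool) \<Rightarrow> ('p \<Rightarrow> 's set)
    \<Rightarrow> 'p fm \<Rightarrow> bool" where
  "valid_in S R1 R2 V \<phi> = (\<forall>s\<in>S. sat R1 R2 V s \<phi>)"

lemma KTdot_valid_in:
  assumes M: "is_model S R1 R2 V" and pointwise_refl: "\<And>s. s \<in> S \<Longrightarrow> R1 s s \<or> R2 s s"
  shows "KTdot \<phi> \<Longrightarrow> valid_in S R1 R2 V \<phi>"
  unfolding valid_in_def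
proof (induction rule: KTdot.induct)
  case (taut \<phi>)
  then show ?case by (metis sat_peval tautology_def)
next
  case dot_top
  then show ?case by simp
next
  case (dot_neg \<phi>)
  then show ?case by simp
next
  case (dot_conj \<phi> \<psi>)
  then show ?case by auto
next
  case (dot_split \<phi> \<psi> \<chi>)
  show ?case by (intro ballI sat_dot_split)
next
  case (axT \<phi> \<psi>)
  show ?case by (intro ballI sat_axT pointwise_refl)
next
  case (mp \<phi> \<psi>)
  then show ?case by simp
next
  case (re \<phi> \<psi>)
  show ?case
  proof
    fix s
    have "sat R1 R2 V v \<phi> = sat R1 R2 V v \<psi>" if "R1 s v \<or> R2 s v" for v
      using that M re.IH by (auto simp: is_model_def)
    then show "sat R1 R2 V s (Iff (Dot \<phi>) (Dot \<psi>))"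
      by (simp only: sat_Iff) (rule sat_Dot_cong)
  qed
qed

lemma one_refl_pointwise: "one_refl S R1 R2 \<Longrightarrow> s \<in> S \<Longrightarrow> R1 s s \<or> R2 s s"
  by (auto simp: one_refl_def refl_on_S_def)

lemma both_refl_imp_one_refl: "both_refl S R1 R2 \<Longrightarrow> one_refl S R1 R2"
  by (simp add: both_refl_def one_refl_def)

lemma conseq_antimono:
  assumes "\<And>S R1 R2. C S R1 R2 \<Longrightarrow> D S R1 R2" "conseq D \<Gamma> \<phi>"
  shows "conseq C \<Gamma> \<phi>"
  using assms unfolding conseq_def by blast

theorem soundness_one_refl:
  assumes "derives \<Gamma> \<phi>"
  shows "conseq (one_refl :: 's set \<Rightarrow> _) \<Gamma> \<phi>"
  unfolding conseq_def
proof (intro allI impI ballI)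
  fix S :: "'s set" and R1 R2 V s
  assume frame: "is_model S R1 R2 V \<and> one_refl S R1 R2" and s: "s \<in> S"
    and \<Gamma>: "\<forall>\<gamma>\<in>\<Gamma>. sat R1 R2 V s \<gamma>"
  obtain L where L: "set L \<subseteq> \<Gamma>" "KTdot (Imp (conjs L) \<phi>)"
    using assms by (auto simp: derives_def)
  have model: "is_model S R1 R2 V" and refl: "\<And>t. t \<in> S \<Longrightarrow> R1 t t \<or> R2 t t"
    using frame one_refl_pointwise[of S R1 R2] by simp_all
  have "valid_in S R1 R2 V (Imp (conjs L) \<phi>)"
    using KTdot_valid_in[OF model refl L(2)] .
  then show "sat R1 R2 V s \<phi>"
    using s \<Gamma> L(1) by (auto simp: valid_in_def sat_conjs)
qed

lemma peval_Top [simp]: "peval f Top"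
  by (simp add: Top_def)

lemma peval_conjs: "peval f (conjs L) = (\<forall>x\<in>set L. peval f x)"
  by (induction L) auto

lemma KTdot_tautI: "(\<And>f. peval f \<phi>) \<Longrightarrow> KTdot \<phi>"
  by (rule taut) (simp add: tautology_def)

lemma derives_taut_rule:
  assumes "derives \<Gamma> a" "\<And>f. peval f a \<Longrightarrow> peval f b"
  shows "derives \<Gamma> b"
proof -
  obtain L where L: "set L \<subseteq> \<Gamma>" "KTdot (Imp (conjs L) a)"
    using assms(1) by (auto simp: derives_def)
  have "KTdot (Imp (Imp (conjs L) a) (Imp (conjs L) b))"
    by (rule KTdot_tautI) (use assms(2) in \<open>auto simp: Imp_def\<close>)
  from mp[OF this L(2)] show ?thesis
    using L(1) unfolding derives_def by blast
qed

lemma derives_taut_rule2: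
  assumes "derives \<Gamma> a" "derives \<Gamma> b" "\<And>f. peval f a \<Longrightarrow> peval f b \<Longrightarrow> peval f c"
  shows "derives \<Gamma> c"
proof -
  obtain A B where A: "set A \<subseteq> \<Gamma>" "KTdot (Imp (conjs A) a)"
    and B: "set B \<subseteq> \<Gamma>" "KTdot (Imp (conjs B) b)"
    using assms(1,2) by (auto simp: derives_def)
  have "KTdot (Imp (Imp (conjs A) a) (Imp (Imp (conjs B) b) (Imp (conjs (A @ B)) c)))"
    by (rule KTdot_tautI) (use assms(3) in \<open>auto simp: Imp_def peval_conjs\<close>)
  from mp[OF mp[OF this A(2)] B(2)] have "KTdot (Imp (conjs (A @ B)) c)" .
  then show ?thesis
    using A(1) B(1) unfolding derives_def by (metis Un_subset_iff set_append)
qed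

lemma derives_KTdot: "KTdot \<phi> \<Longrightarrow> derives \<Gamma> \<phi>"
proof -
  assume "KTdot \<phi>"
  have "KTdot (Imp \<phi> (Imp Top \<phi>))"
    by (rule KTdot_tautI) (simp add: Imp_def)
  from mp[OF this \<open>KTdot \<phi>\<close>] have "KTdot (Imp (conjs []) \<phi>)" by simp
  then show ?thesis unfolding derives_def by (intro exI[of _ "[]"]) simp
qed

lemma derives_member: "\<phi> \<in> \<Gamma> \<Longrightarrow> derives \<Gamma> \<phi>"
proof -
  assume "\<phi> \<in> \<Gamma>"
  moreover have "KTdot (Imp (conjs [\<phi>]) \<phi>)"
    by (rule KTdot_tautI) (simp add: Imp_def)
  ultimately show ?thesis unfolding derives_def by (intro exI[of _ "[\<phi>]"]) simp
qed

lemma derives_Imp_insert: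
  assumes "derives (insert a \<Gamma>) b"
  shows "derives \<Gamma> (Imp a b)"
proof -
  obtain L where L: "set L \<subseteq> insert a \<Gamma>" "KTdot (Imp (conjs L) b)"
    using assms by (auto simp: derives_def)
  let ?L' = "filter (\<lambda>x. x \<noteq> a) L"
  have "peval f (conjs L)" if "peval f (conjs ?L')" "peval f a" for f
    using that by (auto simp: peval_conjs)
  then have "KTdot (Imp (Imp (conjs L) b) (Imp (conjs ?L') (Imp a b)))"
    by (intro KTdot_tautI) (auto simp: Imp_def)
  from mp[OF this L(2)] have "KTdot (Imp (conjs ?L') (Imp a b))" .
  moreover have "set ?L' \<subseteq> \<Gamma>" using L(1) by auto
  ultimately show ?thesis unfolding derives_def by blast
qed

section \<open>Maximal consistent sets\<close>

definition consistent :: "'p fm set \<Rightarrow> bool" where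
  "consistent \<Gamma> = (\<not> derives \<Gamma> (Neg Top))"

definition mcs :: "'p fm set \<Rightarrow> bool" where
  "mcs M = (consistent M \<and> (\<forall>\<phi>. \<phi> \<in> M \<or> Neg \<phi> \<in> M))"

lemma consistent_not_derives_both:
  assumes "consistent \<Gamma>" "derives \<Gamma> \<phi>" "derives \<Gamma> (Neg \<phi>)"
  shows False
proof -
  have "derives \<Gamma> (Neg Top)"
    using assms(2,3) by (rule derives_taut_rule2) simp
  then show False
    using assms(1) by (simp add: consistent_def)
qed

lemma consistent_insert_Neg:
  assumes "\<not> derives \<Gamma> \<phi>"
  shows "consistent (insert (Neg \<phi>) \<Gamma>)"
  unfolding consistent_def
proof
  assume "derives (insert (Neg \<phi>) \<Gamma>) (Neg Top)"
  then have "derives \<Gamma> (Imp (Neg \<phi>) (Neg Top))"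
    by (rule derives_Imp_insert)
  then have "derives \<Gamma> \<phi>"
    by (rule derives_taut_rule) (simp add: Imp_def)
  with assms show False ..
qed

lemma mcs_derives:
  assumes "mcs M" "derives M \<phi>"
  shows "\<phi> \<in> M"
proof (rule ccontr)
  assume "\<phi> \<notin> M"
  then have "derives M (Neg \<phi>)"
    using assms(1) derives_member unfolding mcs_def by blast
  then show False
    using assms consistent_not_derives_both unfolding mcs_def by blast
qed

lemma mcs_Neg:
  assumes "mcs M"
  shows "(Neg a \<in> M) = (a \<notin> M)"
  using assms consistent_not_derives_both[of M a] derives_member[of _ M]
  unfolding mcs_def by blast

lemma mcs_Conj:
  assumes "mcs M"
  shows "(Conj a b \<in> M) = (a \<in> M \<and> b \<in> M)"
proof
  assume "Conj a b \<in> M"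
  then have "derives M (Conj a b)" by (rule derives_member)
  then have "derives M a" "derives M b"
    by (rule derives_taut_rule, simp)+
  then show "a \<in> M \<and> b \<in> M"
    using assms mcs_derives by blast
next
  assume "a \<in> M \<and> b \<in> M"
  then have "derives M (Conj a b)"
    by (intro derives_taut_rule2[OF derives_member derives_member]) auto
  with assms show "Conj a b \<in> M"
    by (rule mcs_derives)
qed

lemma mcs_Imp: "mcs M \<Longrightarrow> (Imp a b \<in> M) = (a \<in> M \<longrightarrow> b \<in> M)"
  by (simp add: Imp_def mcs_Neg mcs_Conj)

lemma mcs_Iff: "mcs M \<Longrightarrow> (Iff a b \<in> M) = (a \<in> M \<longleftrightarrow> b \<in> M)"
  by (auto simp add: Iff_def mcs_Imp mcs_Conj)

lemma mcs_KTdot: "mcs M \<Longrightarrow> KTdot \<phi> \<Longrightarrow> \<phi> \<in> M"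
  by (rule mcs_derives, assumption, rule derives_KTdot)

lemma consistent_Union_chain:
  assumes "C \<noteq> {}" "chain\<^sub>\<subseteq> C" "\<forall>X\<in>C. consistent X"
  shows "consistent (\<Union>C)"
  unfolding consistent_def derives_def
proof
  assume "\<exists>L. set L \<subseteq> \<Union>C \<and> KTdot (Imp (conjs L) (Neg Top))"
  then obtain L where L: "set L \<subseteq> \<Union>C" "KTdot (Imp (conjs L) (Neg Top))" by blast
  have "\<exists>X\<in>C. set L \<subseteq> X"
    using L(1)
  proof (induction L)
    case (Cons x L)
    then obtain X Y where "X \<in> C" "set L \<subseteq> X" "Y \<in> C" "x \<in> Y" by auto
    with assms(2) show ?case unfolding chain_subset_def by (metis insert_subset list.simps(15) order_trans)
  qed (use assms(1) in auto)
  then show False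
    using L(2) assms(3) unfolding consistent_def derives_def by blast
qed

lemma lindenbaum:
  assumes "consistent \<Gamma>"
  obtains M where "\<Gamma> \<subseteq> M" "mcs M"
proof -
  let ?A = "{X. \<Gamma> \<subseteq> X \<and> consistent X}"
  have "\<forall>C\<in>chains ?A. \<exists>U\<in>?A. \<forall>X\<in>C. X \<subseteq> U"
  proof
    fix C assume C: "C \<in> chains ?A"
    show "\<exists>U\<in>?A. \<forall>X\<in>C. X \<subseteq> U"
    proof (cases "C = {}")
      case True
      then show ?thesis using assms by blast
    next
      case False
      from C have "chain\<^sub>\<subseteq> C" "C \<subseteq> ?A"
        by (auto simp: chains_def)
      then have "consistent (\<Union>C)" "\<Gamma> \<subseteq> \<Union>C"
        using consistent_Union_chain[OF False] False by blast+
      then show ?thesis by blast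
    qed
  qed
  from Zorn_Lemma2[OF this] obtain M where M: "M \<in> ?A" and max: "\<forall>X\<in>?A. M \<subseteq> X \<longrightarrow> X = M"
    by (elim bexE)
  have inconsistent: "\<not> consistent (insert \<psi> M)" if "\<psi> \<notin> M" for \<psi>
  proof
    assume "consistent (insert \<psi> M)"
    then have "insert \<psi> M \<in> ?A" using M by blast
    then have "insert \<psi> M = M" using max by blast
    with that show False by blast
  qed
  have "\<phi> \<in> M \<or> Neg \<phi> \<in> M" for \<phi>
  proof (rule ccontr)
    assume "\<not> (\<phi> \<in> M \<or> Neg \<phi> \<in> M)"
    then have "derives (insert \<phi> M) (Neg Top)" "derives (insert (Neg \<phi>) M) (Neg Top)"
      using inconsistent unfolding consistent_def by blast+
    then have "derives M (Imp \<phi> (Neg Top))" "derives M (Imp (Neg \<phi>) (Neg Top))"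
      by (simp_all add: derives_Imp_insert)
    then have "derives M (Neg Top)"
      by (rule derives_taut_rule2) (auto simp: Imp_def)
    then show False using M by (simp add: consistent_def)
  qed
  then show ?thesis using M that by (auto simp: mcs_def)
qed

section \<open>Canonical model\<close>

lemma KTdot_necessitation:
  assumes "KTdot \<phi>"
  shows "KTdot (Dot \<phi>)"
proof -
  have "KTdot (Imp \<phi> (Iff \<phi> Top))"
    by (rule KTdot_tautI) (simp add: Iff_def Imp_def)
  from mp[OF this assms] have "KTdot (Iff (Dot \<phi>) (Dot Top))"
    by (rule re)
  moreover have "KTdot (Imp (Iff (Dot \<phi>) (Dot Top)) (Imp (Dot Top) (Dot \<phi>)))"
    by (rule KTdot_tautI) (simp add: Iff_def Imp_def)
  ultimately have "KTdot (Imp (Dot Top) (Dot \<phi>))"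
    by (rule mp[rotated])
  from mp[OF this dot_top] show ?thesis .
qed

lemma mcs_Dot_Neg:
  assumes "mcs M"
  shows "(Dot (Neg a) \<in> M) = (Dot a \<in> M)"
  using mcs_KTdot[OF assms dot_neg] by (simp add: mcs_Iff[OF assms])

definition determined :: "'p fm set \<Rightarrow> 'p fm set" where
  "determined s = {\<psi>. Dot \<psi> \<in> s \<and> \<psi> \<in> s}"

definition CR :: "'p fm set \<Rightarrow> 'p fm set \<Rightarrow> bool" where
  "CR s t = (mcs s \<and> mcs t \<and> determined s \<subseteq> t)"

definition CV :: "'p \<Rightarrow> 'p fm set set" where
  "CV p = {s. mcs s \<and> Atom p \<in> s}"

lemma CR_refl: "mcs s \<Longrightarrow> CR s s"
  by (auto simp: CR_def determined_def)

lemma conjs_determined: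
  assumes s: "mcs s" and L: "set L \<subseteq> determined s"
  shows "conjs L \<in> determined s"
  using L
proof (induction L)
  case Nil
  have "KTdot (Top :: 'a fm)"
    by (rule KTdot_tautI) simp
  then show ?case
    using mcs_KTdot[OF s] dot_top by (simp add: determined_def)
next
  case (Cons x L)
  then have "x \<in> s" "Dot x \<in> s" "conjs L \<in> s" "Dot (conjs L) \<in> s"
    by (auto simp: determined_def)
  moreover have "Imp (Conj (Dot x) (Dot (conjs L))) (Dot (Conj x (conjs L))) \<in> s"
    using mcs_KTdot[OF s dot_conj] .
  ultimately show ?case
    by (simp add: determined_def mcs_Imp[OF s] mcs_Conj[OF s])
qed

lemma Dot_mem_if_derived_from_determined:
  assumes s: "mcs s" and b: "b \<in> s" and derived: "derives (determined s) b"
  shows "Dot b \<in> s"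
proof -
  obtain L where L: "set L \<subseteq> determined s" "KTdot (Imp (conjs L) b)"
    using derived by (auto simp: derives_def)
  let ?c = "conjs L"
  have c: "?c \<in> s" "Dot ?c \<in> s"
    using conjs_determined[OF s L(1)] by (auto simp: determined_def)
  have "Dot (Imp ?c b) \<in> s"
    using mcs_KTdot[OF s KTdot_necessitation[OF L(2)]] .
  moreover have "Imp ?c (Imp (Dot ?c) (Imp (Dot (Imp ?c b)) (Dot b))) \<in> s"
    using mcs_KTdot[OF s axT] .
  ultimately show ?thesis
    using c by (simp add: mcs_Imp[OF s])
qed

lemma CR_witness:
  assumes s: "mcs s" and b: "b \<in> s" and nb: "Dot b \<notin> s"
  obtains t where "CR s t" "b \<notin> t"
proof -
  have "\<not> derives (determined s) b"
    using Dot_mem_if_derived_from_determined[OF s b] nb by blast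
  from consistent_insert_Neg[OF this] obtain t
    where t: "insert (Neg b) (determined s) \<subseteq> t" "mcs t"
    by (rule lindenbaum)
  have "CR s t"
    using s t by (simp add: CR_def)
  moreover have "b \<notin> t"
    using t by (simp add: mcs_Neg[OF t(2), symmetric])
  ultimately show ?thesis
    by (rule that)
qed

lemma Dot_mem_iff_CR_agree:
  assumes s: "mcs s"
  shows "Dot a \<in> s \<longleftrightarrow> (\<forall>t. CR s t \<longrightarrow> (a \<in> t \<longleftrightarrow> a \<in> s))"
proof
  assume d: "Dot a \<in> s"
  show "\<forall>t. CR s t \<longrightarrow> (a \<in> t \<longleftrightarrow> a \<in> s)"
  proof (intro allI impI)
    fix t assume "CR s t"
    then have t: "mcs t" and sub: "determined s \<subseteq> t"
      by (simp_all add: CR_def)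
    show "a \<in> t \<longleftrightarrow> a \<in> s"
    proof (cases "a \<in> s")
      case True
      then have "a \<in> determined s"
        using d by (simp add: determined_def)
      with sub True show ?thesis by blast
    next
      case False
      then have "Neg a \<in> determined s"
        using d by (simp add: determined_def mcs_Neg[OF s] mcs_Dot_Neg[OF s])
      with sub have "Neg a \<in> t" by blast
      with False show ?thesis by (simp add: mcs_Neg[OF t])
    qed
  qed
next
  assume agree: "\<forall>t. CR s t \<longrightarrow> (a \<in> t \<longleftrightarrow> a \<in> s)"
  show "Dot a \<in> s"
  proof (rule ccontr)
    assume nd: "Dot a \<notin> s"
    show False
    proof (cases "a \<in> s")
      case True
      obtain t where "CR s t" "a \<notin> t"
        by (rule CR_witness[OF s True nd])
      with agree True show False by blast
    next
      case False
      then have "Neg a \<in> s" "Dot (Neg a) \<notin> s"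
        using nd by (simp_all add: mcs_Neg[OF s] mcs_Dot_Neg[OF s])
      then obtain t where t: "CR s t" "Neg a \<notin> t"
        by (rule CR_witness[OF s])
      then have "a \<in> t"
        by (simp add: CR_def mcs_Neg)
      with agree t(1) False show False by blast
    qed
  qed
qed

lemma truth_lemma: "mcs s \<Longrightarrow> sat CR CR CV s \<phi> = (\<phi> \<in> s)"
proof (induction \<phi> arbitrary: s)
  case (Atom p)
  then show ?case by (simp add: CV_def)
next
  case (Neg \<phi>)
  then show ?case by (simp add: mcs_Neg)
next
  case (Conj \<phi>1 \<phi>2)
  then show ?case by (simp add: mcs_Conj)
next
  case (Dot a)
  have IH: "sat CR CR CV t a = (a \<in> t)" if "CR s t" for t
    using that CR_def Dot.IH by blast
  have "sat CR CR CV s (Dot a) \<longleftrightarrow> (\<forall>t u. CR s t \<longrightarrow> CR s u \<longrightarrow> (a \<in> t \<longleftrightarrow> a \<in> u))"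
    using IH by simp
  also have "\<dots> \<longleftrightarrow> (\<forall>t. CR s t \<longrightarrow> (a \<in> t \<longleftrightarrow> a \<in> s))"
    using CR_refl[OF Dot.prems] by blast
  also have "\<dots> \<longleftrightarrow> Dot a \<in> s"
    using Dot_mem_iff_CR_agree[OF Dot.prems] by blast
  finally show ?case .
qed

lemma canonical_is_model:
  fixes M :: "'p fm set"
  assumes "mcs M"
  shows "is_model {s. mcs s} CR CR (CV :: 'p \<Rightarrow> _)"
  using assms by (auto simp: is_model_def CR_def CV_def)

lemma canonical_both_refl: "both_refl {s. mcs s} CR CR"
  by (simp add: both_refl_def refl_on_S_def CR_refl)

theorem completeness_both_refl:
  fixes \<Gamma> :: "'p fm set"
  assumes "conseq (both_refl :: 'p fm set set \<Rightarrow> _) \<Gamma> \<phi>"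
  shows "derives \<Gamma> \<phi>"
proof (rule ccontr)
  assume "\<not> derives \<Gamma> \<phi>"
  from consistent_insert_Neg[OF this] obtain M where M: "insert (Neg \<phi>) \<Gamma> \<subseteq> M" "mcs M"
    by (rule lindenbaum)
  have "\<forall>\<gamma>\<in>\<Gamma>. sat CR CR CV M \<gamma>"
    using M truth_lemma[OF M(2)] by blast
  moreover have "is_model {s. mcs s} CR CR (CV :: 'p \<Rightarrow> _) \<and> both_refl {s. mcs s} CR CR"
    using canonical_is_model[OF M(2)] canonical_both_refl by (rule conjI)
  ultimately have "sat CR CR CV M \<phi>"
    using assms M(2) unfolding conseq_def by blast
  then have "\<phi> \<in> M"
    using truth_lemma[OF M(2)] by simp
  moreover have "Neg \<phi> \<in> M"
    using M(1) by blast
  ultimately show False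
    by (simp add: mcs_Neg[OF M(2)])
qed

lemma soundness_both_refl: "derives \<Gamma> \<phi> \<Longrightarrow> conseq both_refl \<Gamma> \<phi>"
  by (rule conseq_antimono[OF both_refl_imp_one_refl soundness_one_refl])

lemma completeness_one_refl:
  fixes \<Gamma> :: "'p fm set"
  assumes "conseq (one_refl :: 'p fm set set \<Rightarrow> _) \<Gamma> \<phi>"
  shows "derives \<Gamma> \<phi>"
  by (rule completeness_both_refl, rule conseq_antimono[OF both_refl_imp_one_refl assms])

theorem mainTheorem12:
  fixes \<Gamma> :: "'p fm set" and \<phi> :: "'p fm"
  shows "(derives \<Gamma> \<phi> \<longrightarrow> conseq (both_refl :: 's set \<Rightarrow> _) \<Gamma> \<phi>)
       \<and> (derives \<Gamma> \<phi> \<longleftrightarrow> conseq (both_refl :: 'p fm set set \<Rightarrow> _) \<Gamma> \<phi>)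
       \<and> (derives \<Gamma> \<phi> \<longrightarrow> conseq (one_refl :: 's set \<Rightarrow> _) \<Gamma> \<phi>)
       \<and> (derives \<Gamma> \<phi> \<longleftrightarrow> conseq (one_refl :: 'p fm set set \<Rightarrow> _) \<Gamma> \<phi>)"
proof (intro conjI)
  show "derives \<Gamma> \<phi> \<longrightarrow> conseq (both_refl :: 's set \<Rightarrow> _) \<Gamma> \<phi>"
    by (rule impI) (rule soundness_both_refl)
  show "derives \<Gamma> \<phi> \<longleftrightarrow> conseq (both_refl :: 'p fm set set \<Rightarrow> _) \<Gamma> \<phi>"
    by (rule iffI) (erule soundness_both_refl, erule completeness_both_refl)
  show "derives \<Gamma> \<phi> \<longrightarrow> conseq (one_refl :: 's set \<Rightarrow> _) \<Gamma> \<phi>"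
    by (rule impI) (rule soundness_one_refl)
  show "derives \<Gamma> \<phi> \<longleftrightarrow> conseq (one_refl :: 'p fm set set \<Rightarrow> _) \<Gamma> \<phi>"
    by (rule iffI) (erule soundness_one_refl, erule completeness_one_refl)
qed

end
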